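(* Let $N\in\mathbb N$, $\Sigma_N=\{1,\ldots,N\}^{\mathbb Z}$ with the shift $\sigma$, $I=[0,1]$, and let $f_1,\ldots,f_N\colon I\to f_i(I)\subset I$ be $C^1$-diffeomorphisms onto their images. Let $F\colon\Sigma_N\times I\to\Sigma_N\times I$, $F(\xi,p)=(\sigma(\xi),f_{\xi_0}(p))$, and let $\Lambda=\bigcap_{n\ge0}F^n(\Sigma_N\times I)$. Then for every $F$-invariant hyperbolic set $H\subset\Lambda$ there exists $M\ge1$ such that $\#H_\xi\le M$ for all $\xi\in\Sigma_N$, where $H_\xi:=\Pi_2(H\cap(\{\xi\}\times I))$.
   Context: $\Pi_2\colon\Sigma_N\times I\to I$ is the projection onto the second coordinate. For $k\le m$ write $f_{\xi_k\ldots\xi_m}:=f_{\xi_m}\circ\cdots\circ f_{\xi_k}$. On $\Lambda$ the map $F$ is invertible, with $F^{-1}(\xi,p)=(\sigma^{-1}(\xi),f_{\xi_{-1}}^{-1}(p))$. A set $H\subset\Lambda$ is hyperbolic with fiber contraction if there are $c>0$ and $0<\lambda<1$ with $|(f_{\xi_0\ldots\xi_{n-1}})'(p)|\le c\lambda^n$ for all $n\ge1$ and all $(\xi,p)\in H$. It is hyperbolic with fiber expansion if it is hyperbolic with fiber contraction with respect to $F^{-1}$, i.e. the analogous bound holds for the derivatives of the fiber components of $F^{-n}$ restricted to $\Lambda$. $H$ is hyperbolic if it is hyperbolic with fiber contraction or with fiber expansion. *)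

theory Defs
  imports "HOL-Analysis.Analysis"
begin

abbreviation unitI :: "real set" where "unitI \<equiv> {0..1}"

definition SigmaN :: "nat \<Rightarrow> (int \<Rightarrow> nat) set" where
  "SigmaN N = {\<xi>. \<forall>k. \<xi> k \<in> {1..N}}"

definition shift :: "(int \<Rightarrow> nat) \<Rightarrow> (int \<Rightarrow> nat)" where
  "shift \<xi> = (\<lambda>k. \<xi> (k + 1))"

definition shift_inv :: "(int \<Rightarrow> nat) \<Rightarrow> (int \<Rightarrow> nat)" where
  "shift_inv \<xi> = (\<lambda>k. \<xi> (k - 1))"

text \<open>f is a C^1-diffeomorphism from I onto its image f(I), with f(I) a subset of I
  (one-sided derivatives at the endpoints; the derivative is continuous and nonvanishing,
  so the inverse is C^1 as well).\<close>
definition C1_diffeo_into_I :: "(real \<Rightarrow> real) \<Rightarrow> bool" where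
  "C1_diffeo_into_I f \<longleftrightarrow>
     f ` unitI \<subseteq> unitI \<and> inj_on f unitI \<and>
     (\<exists>f'. (\<forall>x\<in>unitI. (f has_real_derivative f' x) (at x within unitI)) \<and>
           continuous_on unitI f' \<and> (\<forall>x\<in>unitI. f' x \<noteq> 0))"

definition skewF :: "(nat \<Rightarrow> real \<Rightarrow> real) \<Rightarrow> (int \<Rightarrow> nat) \<times> real \<Rightarrow> (int \<Rightarrow> nat) \<times> real" where
  "skewF f = (\<lambda>(\<xi>, p). (shift \<xi>, f (\<xi> 0) p))"

definition skewF_inv :: "(nat \<Rightarrow> real \<Rightarrow> real) \<Rightarrow> (int \<Rightarrow> nat) \<times> real \<Rightarrow> (int \<Rightarrow> nat) \<times> real" where
  "skewF_inv f = (\<lambda>(\<xi>, p). (shift_inv \<xi>, the_inv_into unitI (f (\<xi> (-1))) p))"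

definition LambdaSet :: "nat \<Rightarrow> (nat \<Rightarrow> real \<Rightarrow> real) \<Rightarrow> ((int \<Rightarrow> nat) \<times> real) set" where
  "LambdaSet N f = (\<Inter>n. (skewF f ^^ n) ` (SigmaN N \<times> unitI))"

text \<open>Hyperbolic with fiber contraction: |(f_{xi_0...xi_{n-1}})'(p)| <= c lambda^n, where
  f_{xi_0...xi_{n-1}} = f_{xi_{n-1}} o ... o f_{xi_0} is the fiber component of F^n
  (derivative taken on I).\<close>
definition hyp_fiber_contraction :: "(nat \<Rightarrow> real \<Rightarrow> real) \<Rightarrow> ((int \<Rightarrow> nat) \<times> real) set \<Rightarrow> bool" where
  "hyp_fiber_contraction f H \<longleftrightarrow>
     (\<exists>c lam. c > 0 \<and> 0 < lam \<and> lam < 1 \<and>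
       (\<forall>n\<ge>1. \<forall>(\<xi>, p)\<in>H.
          \<bar>vector_derivative (\<lambda>q. snd ((skewF f ^^ n) (\<xi>, q))) (at p within unitI)\<bar> \<le> c * lam ^ n))"

text \<open>For fixed xi, the fiber component of F^{-n} is
  q \<mapsto> f_{xi_{-n}}^{-1} o ... o f_{xi_{-1}}^{-1} (q), defined on the image
  f_{xi_{-n}...xi_{-1}}(I) = fiber component of F^n over sigma^{-n} xi applied to I;
  the derivative is taken within that interval.\<close>
definition hyp_fiber_expansion :: "(nat \<Rightarrow> real \<Rightarrow> real) \<Rightarrow> ((int \<Rightarrow> nat) \<times> real) set \<Rightarrow> bool" where
  "hyp_fiber_expansion f H \<longleftrightarrow>
     (\<exists>c lam. c > 0 \<and> 0 < lam \<and> lam < 1 \<and>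
       (\<forall>n\<ge>1. \<forall>(\<xi>, p)\<in>H.
          \<bar>vector_derivative (\<lambda>q. snd ((skewF_inv f ^^ n) (\<xi>, q)))
              (at p within ((\<lambda>q. snd ((skewF f ^^ n) ((shift_inv ^^ n) \<xi>, q))) ` unitI))\<bar>
            \<le> c * lam ^ n))"

definition hyperbolic_set :: "(nat \<Rightarrow> real \<Rightarrow> real) \<Rightarrow> ((int \<Rightarrow> nat) \<times> real) set \<Rightarrow> bool" where
  "hyperbolic_set f H \<longleftrightarrow> hyp_fiber_contraction f H \<or> hyp_fiber_expansion f H"

definition fiber :: "((int \<Rightarrow> nat) \<times> real) set \<Rightarrow> (int \<Rightarrow> nat) \<Rightarrow> real set" where
  "fiber H \<xi> = snd ` (H \<inter> ({\<xi>} \<times> unitI))"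

end

(*
  Hyperbolicity gives an iterate F^m whose fiber maps f_{xi_0 ... xi_{m-1}} have derivative
  of modulus at most 1/4 on H (fiber contraction), or at least 4 (fiber expansion: the bound
  on the inverse branches inverts). Only finitely many such compositions occur, so their
  derivatives are uniformly equicontinuous, and there is a scale delta below which F^m halves
  distances between points of H in a common fiber (resp. at least doubles them, up to the
  scale delta, using monotonicity of the injective fiber maps).

  Given finitely many points of a fiber H_xi, pull them back far enough along F^m (using
  F(H) = H and injectivity of the shift) in the contracting case, or push them forward in
  the expanding case, until the resulting points of a common fiber are delta-separated.
  A delta-separated subset of [0,1] has at most floor(1/delta) + 1 points, a bound
  independent of xi.
*)
theory Submission
  imports Defs
begin

section \<open>Counting separated points in the fibers of a skew map\<close>

lemma card_le_if_separated_image: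
  fixes g :: "'a \<Rightarrow> real"
  assumes "finite S" and "g ` S \<subseteq> unitI" and "\<delta> > 0"
    and sep: "\<And>s t. s \<in> S \<Longrightarrow> t \<in> S \<Longrightarrow> s \<noteq> t \<Longrightarrow> \<delta> \<le> \<bar>g s - g t\<bar>"
  shows "card S \<le> nat \<lfloor>1 / \<delta>\<rfloor> + 1"
proof -
  define box where "box s = nat \<lfloor>g s / \<delta>\<rfloor>" for s
  have "inj_on box S"
  proof (rule inj_onI, rule ccontr)
    fix s t assume st: "s \<in> S" "t \<in> S" "box s = box t" "s \<noteq> t"
    have "0 \<le> g s" "0 \<le> g t" using st assms(2) by auto
    with \<open>\<delta> > 0\<close> have "\<lfloor>g s / \<delta>\<rfloor> = \<lfloor>g t / \<delta>\<rfloor>"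
      using st(3) by (simp add: box_def nat_eq_iff2)
    then have "\<bar>g s / \<delta> - g t / \<delta>\<bar> < 1" by linarith
    with \<open>\<delta> > 0\<close> have "\<bar>g s - g t\<bar> < \<delta>"
      by (simp add: diff_divide_distrib[symmetric] divide_less_eq)
    with sep st show False by force
  qed
  moreover have "box s \<in> {0..nat \<lfloor>1 / \<delta>\<rfloor>}" if "s \<in> S" for s
  proof -
    have "g s \<le> 1" using that assms(2) by auto
    with \<open>\<delta> > 0\<close> show ?thesis by (auto simp: box_def intro!: nat_mono floor_mono divide_right_mono)
  qed
  ultimately have "card S \<le> card {0..nat \<lfloor>1 / \<delta>\<rfloor>}"
    by (intro card_inj_on_le) auto
  then show ?thesis by simp
qed

lemma finite_set_min_gap:
  fixes S :: "real set"
  assumes "finite S"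
  obtains d where "d > 0" and "\<And>s t. s \<in> S \<Longrightarrow> t \<in> S \<Longrightarrow> s \<noteq> t \<Longrightarrow> d \<le> \<bar>s - t\<bar>"
proof -
  let ?D = "(\<lambda>(s, t). \<bar>s - t\<bar>) ` {(s, t) \<in> S \<times> S. s \<noteq> t}"
  have "finite ?D"
    using assms by (auto intro: finite_subset[of _ "S \<times> S"])
  show ?thesis
  proof (cases "?D = {}")
    case True
    then show ?thesis by (intro that[of 1]) auto
  next
    case False
    with \<open>finite ?D\<close> show ?thesis
      by (intro that[of "Min ?D"]) (auto intro!: Min_le)
  qed
qed

lemma fst_funpow_skew:
  fixes T :: "'a \<times> 'b \<Rightarrow> 'a \<times> 'b"
  assumes "\<And>z. fst (T z) = \<phi> (fst z)"
  shows "fst ((T ^^ k) z) = (\<phi> ^^ k) (fst z)"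
  by (induction k) (simp_all add: assms)

lemma funpow_contracts_fibers:
  fixes T :: "'a \<times> real \<Rightarrow> 'a \<times> real"
  assumes fst_T: "\<And>z. fst (T z) = \<phi> (fst z)" and "T ` H \<subseteq> H"
    and contr: "\<And>\<eta> x y. (\<eta>, x) \<in> H \<Longrightarrow> (\<eta>, y) \<in> H \<Longrightarrow> \<bar>x - y\<bar> < \<delta> \<Longrightarrow>
        \<bar>snd (T (\<eta>, x)) - snd (T (\<eta>, y))\<bar> \<le> \<bar>x - y\<bar> / 2"
    and "(\<eta>, x) \<in> H" "(\<eta>, y) \<in> H" "\<bar>x - y\<bar> < \<delta>"
  shows "\<bar>snd ((T ^^ k) (\<eta>, x)) - snd ((T ^^ k) (\<eta>, y))\<bar> \<le> \<bar>x - y\<bar> / 2 ^ k"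
  using assms(4-6)
proof (induction k arbitrary: \<eta> x y)
  case (Suc k)
  let ?x = "snd (T (\<eta>, x))" and ?y = "snd (T (\<eta>, y))"
  have T_split: "T (\<eta>, v) = (\<phi> \<eta>, snd (T (\<eta>, v)))" for v
    using fst_T[of "(\<eta>, v)"] by (metis fst_conv prod.collapse)
  have step: "\<bar>?x - ?y\<bar> \<le> \<bar>x - y\<bar> / 2" using contr Suc.prems by blast
  have "(\<phi> \<eta>, ?x) \<in> H" "(\<phi> \<eta>, ?y) \<in> H"
    using Suc.prems(1,2) \<open>T ` H \<subseteq> H\<close> T_split by (metis image_subset_iff)+
  moreover have "\<bar>?x - ?y\<bar> < \<delta>" using step Suc.prems(3) by argo
  ultimately have "\<bar>snd ((T ^^ k) (\<phi> \<eta>, ?x)) - snd ((T ^^ k) (\<phi> \<eta>, ?y))\<bar> \<le> \<bar>?x - ?y\<bar> / 2 ^ k"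
    by (rule Suc.IH)
  also have "\<dots> \<le> \<bar>x - y\<bar> / 2 ^ Suc k"
    using divide_right_mono[OF step, of "2 ^ k"] by simp
  finally show ?case by (simp only: funpow_Suc_right o_apply, subst (1 2) T_split)
qed simp

lemma funpow_expands_fibers:
  fixes T :: "'a \<times> real \<Rightarrow> 'a \<times> real"
  assumes fst_T: "\<And>z. fst (T z) = \<phi> (fst z)" and "T ` H \<subseteq> H"
    and expa: "\<And>\<eta> x y. (\<eta>, x) \<in> H \<Longrightarrow> (\<eta>, y) \<in> H \<Longrightarrow>
        min \<delta> (2 * \<bar>x - y\<bar>) \<le> \<bar>snd (T (\<eta>, x)) - snd (T (\<eta>, y))\<bar>"
    and "(\<eta>, x) \<in> H" "(\<eta>, y) \<in> H"
  shows "min \<delta> (2 ^ k * \<bar>x - y\<bar>) \<le> \<bar>snd ((T ^^ k) (\<eta>, x)) - snd ((T ^^ k) (\<eta>, y))\<bar>"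
  using assms(4,5)
proof (induction k arbitrary: \<eta> x y)
  case (Suc k)
  let ?x = "snd (T (\<eta>, x))" and ?y = "snd (T (\<eta>, y))"
  have T_split: "T (\<eta>, v) = (\<phi> \<eta>, snd (T (\<eta>, v)))" for v
    using fst_T[of "(\<eta>, v)"] by (metis fst_conv prod.collapse)
  have step: "min \<delta> (2 * \<bar>x - y\<bar>) \<le> \<bar>?x - ?y\<bar>" using expa Suc.prems by blast
  have "(\<phi> \<eta>, ?x) \<in> H" "(\<phi> \<eta>, ?y) \<in> H"
    using Suc.prems \<open>T ` H \<subseteq> H\<close> T_split by (metis image_subset_iff)+
  then have IH: "min \<delta> (2 ^ k * \<bar>?x - ?y\<bar>) \<le> \<bar>snd ((T ^^ k) (\<phi> \<eta>, ?x)) - snd ((T ^^ k) (\<phi> \<eta>, ?y))\<bar>"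
    by (rule Suc.IH)
  have "min \<delta> (2 ^ Suc k * \<bar>x - y\<bar>) \<le> min \<delta> (2 ^ k * \<bar>?x - ?y\<bar>)"
  proof (cases "\<delta> \<le> \<bar>?x - ?y\<bar>")
    case True
    have "\<bar>?x - ?y\<bar> \<le> 2 ^ k * \<bar>?x - ?y\<bar>" by (simp add: mult_le_cancel_right1)
    with True show ?thesis by linarith
  next
    case False
    with step have "2 * \<bar>x - y\<bar> \<le> \<bar>?x - ?y\<bar>" by linarith
    then have "2 ^ Suc k * \<bar>x - y\<bar> \<le> 2 ^ k * \<bar>?x - ?y\<bar>" by simp
    then show ?thesis by linarith
  qed
  with IH show ?case by (simp only: funpow_Suc_right o_apply, subst (1 2) T_split) linarith
qed simp

lemma funpow_image_subset: "T ` H \<subseteq> H \<Longrightarrow> (T ^^ k) ` H \<subseteq> H"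
  by (induction k) (auto simp: image_comp[symmetric])

lemma funpow_image_eq: "T ` H = H \<Longrightarrow> (T ^^ k) ` H = H"
  by (induction k) (simp_all add: image_image[symmetric])

lemma card_fiber_le_if_contracting:
  fixes T :: "'a \<times> real \<Rightarrow> 'a \<times> real"
  assumes fst_T: "\<And>z. fst (T z) = \<phi> (fst z)" and "inj \<phi>" and "T ` H = H"
    and H_unitI: "H \<subseteq> UNIV \<times> unitI" and "\<delta> > 0"
    and contr: "\<And>\<eta> x y. (\<eta>, x) \<in> H \<Longrightarrow> (\<eta>, y) \<in> H \<Longrightarrow> \<bar>x - y\<bar> < \<delta> \<Longrightarrow>
        \<bar>snd (T (\<eta>, x)) - snd (T (\<eta>, y))\<bar> \<le> \<bar>x - y\<bar> / 2"
    and "finite S" and S_fiber: "\<And>s. s \<in> S \<Longrightarrow> (\<xi>, s) \<in> H"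
  shows "card S \<le> nat \<lfloor>1 / \<delta>\<rfloor> + 1"
proof -
  obtain d where "d > 0" and gap: "\<And>s t. s \<in> S \<Longrightarrow> t \<in> S \<Longrightarrow> s \<noteq> t \<Longrightarrow> d \<le> \<bar>s - t\<bar>"
    using finite_set_min_gap[OF \<open>finite S\<close>] by blast
  obtain k :: nat where "\<delta> / d < 2 ^ k" using real_arch_pow[of 2 "\<delta> / d"] by auto
  with \<open>d > 0\<close> have k: "\<delta> / 2 ^ k < d" by (simp add: field_simps)
  have "\<forall>s\<in>S. \<exists>z\<in>H. (T ^^ k) z = (\<xi>, s)"
    using S_fiber funpow_image_eq[OF \<open>T ` H = H\<close>, of k] by (metis imageE)
  then obtain pre where pre: "\<And>s. s \<in> S \<Longrightarrow> pre s \<in> H \<and> (T ^^ k) (pre s) = (\<xi>, s)"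
    by metis
  have base: "fst (pre s) = fst (pre t)" if "s \<in> S" "t \<in> S" for s t
  proof -
    have "(\<phi> ^^ k) (fst (pre s)) = (\<phi> ^^ k) (fst (pre t))"
      using pre that fst_funpow_skew[of T \<phi> k, OF fst_T] by (metis fst_conv)
    then show ?thesis using inj_fn[OF \<open>inj \<phi>\<close>] by (metis injD)
  qed
  have "\<delta> \<le> \<bar>snd (pre s) - snd (pre t)\<bar>" if st: "s \<in> S" "t \<in> S" "s \<noteq> t" for s t
  proof (rule ccontr)
    assume "\<not> \<delta> \<le> \<bar>snd (pre s) - snd (pre t)\<bar>"
    then have close: "\<bar>snd (pre s) - snd (pre t)\<bar> < \<delta>" by simp
    define \<eta> where "\<eta> = fst (pre s)"
    have ps: "pre s = (\<eta>, snd (pre s))" and pt: "pre t = (\<eta>, snd (pre t))"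
      using base[OF st(1,2)] by (simp_all add: \<eta>_def) (metis prod.collapse)
    have "\<bar>snd ((T ^^ k) (\<eta>, snd (pre s))) - snd ((T ^^ k) (\<eta>, snd (pre t)))\<bar>
        \<le> \<bar>snd (pre s) - snd (pre t)\<bar> / 2 ^ k"
      by (rule funpow_contracts_fibers[OF fst_T _ contr])
        (use pre[OF st(1)] pre[OF st(2)] ps pt close \<open>T ` H = H\<close> in \<open>simp_all, metis+\<close>)
    then have "\<bar>s - t\<bar> \<le> \<bar>snd (pre s) - snd (pre t)\<bar> / 2 ^ k"
      using pre[OF st(1)] pre[OF st(2)] ps pt by (metis snd_conv)
    also have "\<dots> < \<delta> / 2 ^ k" using close by (simp add: divide_strict_right_mono)
    finally show False using k gap[OF st] by linarith
  qed
  moreover have "(\<lambda>s. snd (pre s)) ` S \<subseteq> unitI" using pre H_unitI by fastforce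
  ultimately show ?thesis
    using card_le_if_separated_image[OF \<open>finite S\<close> _ \<open>\<delta> > 0\<close>] by blast
qed

lemma card_fiber_le_if_expanding:
  fixes T :: "'a \<times> real \<Rightarrow> 'a \<times> real"
  assumes fst_T: "\<And>z. fst (T z) = \<phi> (fst z)" and "T ` H \<subseteq> H"
    and H_unitI: "H \<subseteq> UNIV \<times> unitI" and "\<delta> > 0"
    and expa: "\<And>\<eta> x y. (\<eta>, x) \<in> H \<Longrightarrow> (\<eta>, y) \<in> H \<Longrightarrow>
        min \<delta> (2 * \<bar>x - y\<bar>) \<le> \<bar>snd (T (\<eta>, x)) - snd (T (\<eta>, y))\<bar>"
    and "finite S" and S_fiber: "\<And>s. s \<in> S \<Longrightarrow> (\<xi>, s) \<in> H"
  shows "card S \<le> nat \<lfloor>1 / \<delta>\<rfloor> + 1"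
proof -
  obtain d where "d > 0" and gap: "\<And>s t. s \<in> S \<Longrightarrow> t \<in> S \<Longrightarrow> s \<noteq> t \<Longrightarrow> d \<le> \<bar>s - t\<bar>"
    using finite_set_min_gap[OF \<open>finite S\<close>] by blast
  obtain k :: nat where "\<delta> / d < 2 ^ k" using real_arch_pow[of 2 "\<delta> / d"] by auto
  with \<open>d > 0\<close> have k: "\<delta> < 2 ^ k * d" by (simp add: field_simps)
  let ?g = "\<lambda>s. snd ((T ^^ k) (\<xi>, s))"
  have "\<delta> \<le> \<bar>?g s - ?g t\<bar>" if st: "s \<in> S" "t \<in> S" "s \<noteq> t" for s t
  proof -
    have "2 ^ k * d \<le> 2 ^ k * \<bar>s - t\<bar>" using gap[OF st] by simp
    moreover have "min \<delta> (2 ^ k * \<bar>s - t\<bar>) \<le> \<bar>?g s - ?g t\<bar>"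
      by (rule funpow_expands_fibers[OF fst_T \<open>T ` H \<subseteq> H\<close> expa S_fiber S_fiber]) (use st in auto)
    ultimately show ?thesis using k by linarith
  qed
  moreover have "?g ` S \<subseteq> unitI"
  proof
    fix u assume "u \<in> ?g ` S"
    then obtain s where "s \<in> S" "u = ?g s" by blast
    then have "(T ^^ k) (\<xi>, s) \<in> H"
      using S_fiber funpow_image_subset[OF \<open>T ` H \<subseteq> H\<close>, of k] by blast
    with H_unitI \<open>u = ?g s\<close> show "u \<in> unitI" by (metis mem_Sigma_iff prod.collapse subsetD)
  qed
  ultimately show ?thesis
    using card_le_if_separated_image[OF \<open>finite S\<close> _ \<open>\<delta> > 0\<close>] by blast
qed

section \<open>Real-variable lemmas\<close>

lemma finite_family_uniformly_equicontinuous: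
  fixes G :: "('a::metric_space \<Rightarrow> 'b::metric_space) set"
  assumes "finite G" and "\<And>g. g \<in> G \<Longrightarrow> continuous_on S g" and "compact S" and "\<epsilon> > 0"
  obtains \<delta> where "\<delta> > 0"
    and "\<And>g x y. g \<in> G \<Longrightarrow> x \<in> S \<Longrightarrow> y \<in> S \<Longrightarrow> dist x y < \<delta> \<Longrightarrow> dist (g x) (g y) < \<epsilon>"
proof -
  have "\<exists>\<delta>>0. \<forall>g\<in>G. \<forall>x\<in>S. \<forall>y\<in>S. dist x y < \<delta> \<longrightarrow> dist (g x) (g y) < \<epsilon>"
    using assms(1,2)
  proof (induction rule: finite_induct)
    case empty
    then show ?case by (intro exI[of _ 1]) auto
  next
    case (insert g G)
    then obtain \<delta>1 where "\<delta>1 > 0" and \<delta>1: "\<forall>h\<in>G. \<forall>x\<in>S. \<forall>y\<in>S. dist x y < \<delta>1 \<longrightarrow> dist (h x) (h y) < \<epsilon>"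
      by auto
    have "uniformly_continuous_on S g"
      using insert.prems \<open>compact S\<close> by (intro compact_uniformly_continuous) auto
    then obtain \<delta>2 where "\<delta>2 > 0" and \<delta>2: "\<forall>x\<in>S. \<forall>y\<in>S. dist y x < \<delta>2 \<longrightarrow> dist (g y) (g x) < \<epsilon>"
      unfolding uniformly_continuous_on_def using \<open>\<epsilon> > 0\<close> by metis
    show ?case
      using \<open>\<delta>1 > 0\<close> \<open>\<delta>2 > 0\<close> \<delta>1 \<delta>2 by (intro exI[of _ "min \<delta>1 \<delta>2"]) (auto simp: dist_commute)
  qed
  then show ?thesis using that by blast
qed

lemma mvt_abs_within_interval:
  fixes g D :: "real \<Rightarrow> real"
  assumes der: "\<And>z. z \<in> {a..b} \<Longrightarrow> (g has_real_derivative D z) (at z within {a..b})"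
    and "x \<in> {a..b}" and "y \<in> {a..b}"
  obtains z where "z \<in> {a..b}" and "\<bar>z - x\<bar> \<le> \<bar>y - x\<bar>" and "\<bar>g y - g x\<bar> = \<bar>D z\<bar> * \<bar>y - x\<bar>"
proof -
  have mvt: "\<exists>z\<in>{u..v}. g v - g u = D z * (v - u)" if "a \<le> u" "u \<le> v" "v \<le> b" for u v
  proof (rule mvt_very_simple[OF \<open>u \<le> v\<close>])
    fix z assume "u \<le> z" "z \<le> v"
    with that have "(g has_real_derivative D z) (at z within {u..v})"
      by (intro has_field_derivative_subset[OF der]) auto
    then show "(g has_derivative (\<lambda>h. D z * h)) (at z within {u..v})"
      by (simp add: has_field_derivative_def)
  qed
  consider "x \<le> y" | "y \<le> x" by linarith
  then show ?thesis
  proof cases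
    case 1
    then obtain z where "z \<in> {x..y}" "g y - g x = D z * (y - x)" using mvt[of x y] 1 assms(2,3) by auto
    then show ?thesis using assms(2,3) by (intro that[of z]) (auto simp: abs_mult)
  next
    case 2
    then obtain z where "z \<in> {y..x}" "g x - g y = D z * (x - y)" using mvt[of y x] 2 assms(2,3) by auto
    then show ?thesis using assms(2,3) by (intro that[of z]) (auto simp: abs_mult abs_minus_commute)
  qed
qed

text \<open>An injective continuous map is monotone, so expansion at small scales around x
  propagates to all larger distances from x.\<close>

lemma inj_continuous_expands_from_local:
  fixes g :: "real \<Rightarrow> real"
  assumes cont: "continuous_on {a..b} g" and inj: "inj_on g {a..b}" and "\<delta> > 0"
    and x: "x \<in> {a..b}" and y: "y \<in> {a..b}"
    and local: "\<And>z. z \<in> {a..b} \<Longrightarrow> \<bar>z - x\<bar> \<le> \<delta> \<Longrightarrow> 2 * \<bar>z - x\<bar> \<le> \<bar>g z - g x\<bar>"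
  shows "2 * min \<delta> \<bar>y - x\<bar> \<le> \<bar>g y - g x\<bar>"
proof (cases "\<bar>y - x\<bar> \<le> \<delta>")
  case True
  then show ?thesis using local[OF y] by simp
next
  case False
  define z where "z = (if x < y then x + \<delta> else x - \<delta>)"
  have z: "min x y < z" "z < max x y" and z_x: "\<bar>z - x\<bar> = \<delta>"
    using False \<open>\<delta> > 0\<close> by (auto simp: z_def)
  have sub: "{min x y..max x y} \<subseteq> {a..b}" using x y by auto
  then have "(g (min x y) < g z \<and> g z < g (max x y)) \<or> (g (max x y) < g z \<and> g z < g (min x y))"
    by (intro continuous_inj_imp_mono[OF z] continuous_on_subset[OF cont] inj_on_subset[OF inj])
  then have "\<bar>g z - g x\<bar> \<le> \<bar>g y - g x\<bar>" by (cases "x \<le> y") (auto simp: min_def max_def)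
  moreover have "z \<in> {a..b}" using z sub by auto
  then have "2 * \<delta> \<le> \<bar>g z - g x\<bar>" using local[of z] z_x by simp
  ultimately show ?thesis using False by linarith
qed

lemma has_real_derivative_inverse_within:
  fixes g h :: "real \<Rightarrow> real"
  assumes dg: "(g has_real_derivative D) (at x within S)" and "D \<noteq> 0" and "x \<in> S"
    and hg: "\<And>y. y \<in> S \<Longrightarrow> h (g y) = y"
    and h_cont: "continuous (at (g x) within g ` S) h"
  shows "(h has_real_derivative inverse D) (at (g x) within g ` S)"
proof -
  let ?F = "at (g x) within g ` S"
  have "((\<lambda>z. (g z - g x) / (z - x)) \<longlongrightarrow> D) (at x within S)"
    using dg has_field_derivative_iff by blast
  moreover have "filterlim h (at x within S) ?F"
  proof -
    have "eventually (\<lambda>u. h u \<in> S \<and> h u \<noteq> x) ?F"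
      unfolding eventually_at_filter using hg \<open>x \<in> S\<close> by (auto intro!: always_eventually)
    moreover have "(h \<longlongrightarrow> x) ?F" using h_cont hg[OF \<open>x \<in> S\<close>] by (simp add: continuous_within)
    ultimately show ?thesis by (simp add: filterlim_at)
  qed
  ultimately have "((\<lambda>u. (g (h u) - g x) / (h u - x)) \<longlongrightarrow> D) ?F"
    by (rule filterlim_compose)
  moreover have "eventually (\<lambda>u. (g (h u) - g x) / (h u - x) = (u - g x) / (h u - h (g x))) ?F"
    unfolding eventually_at_filter using hg \<open>x \<in> S\<close> by (auto intro!: always_eventually)
  ultimately have "((\<lambda>u. (u - g x) / (h u - h (g x))) \<longlongrightarrow> D) ?F"
    using tendsto_cong by force
  then have "((\<lambda>u. inverse ((u - g x) / (h u - h (g x)))) \<longlongrightarrow> inverse D) ?F"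
    using \<open>D \<noteq> 0\<close> by (rule tendsto_inverse)
  then show ?thesis by (simp add: has_field_derivative_iff)
qed

lemma vector_derivative_inverse_on_image:
  fixes g h :: "real \<Rightarrow> real"
  assumes cont: "continuous_on {a..b} g" and inj: "inj_on g {a..b}" and "a < b"
    and dg: "(g has_real_derivative D) (at x within {a..b})" and "D \<noteq> 0" and x: "x \<in> {a..b}"
    and hg: "\<And>y. y \<in> {a..b} \<Longrightarrow> h (g y) = y"
  shows "vector_derivative h (at (g x) within g ` {a..b}) = inverse D"
proof -
  have "continuous_on (g ` {a..b}) h"
    by (rule continuous_on_inv[OF cont compact_Icc]) (use hg in auto)
  then have "continuous (at (g x) within g ` {a..b}) h"
    using x by (simp add: continuous_on_eq_continuous_within)
  then have dh: "(h has_real_derivative inverse D) (at (g x) within g ` {a..b})"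
    using has_real_derivative_inverse_within[OF dg \<open>D \<noteq> 0\<close> x] hg by blast
  obtain c d where cd: "g ` {a..b} = {c..d}"
    using connected_compact_interval_1 connected_continuous_image[OF cont] compact_continuous_image[OF cont]
    by (metis compact_Icc connected_Icc)
  have "g a \<noteq> g b" using inj \<open>a < b\<close> by (auto dest: inj_onD)
  moreover have "g a \<in> {c..d}" "g b \<in> {c..d}" using cd \<open>a < b\<close> by auto
  ultimately have "c < d" by auto
  moreover have "(h has_vector_derivative inverse D) (at (g x) within {c..d})"
    using dh cd has_real_derivative_iff_has_vector_derivative by metis
  ultimately show ?thesis
    using cd x vector_derivative_within_closed_interval by fastforce
qed

lemma geometric_eventually_less:
  fixes c r e :: real
  assumes "0 \<le> r" "r < 1" "e > 0"
  obtains m where "m \<ge> 1" and "c * r ^ m < e"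
proof -
  have "(\<lambda>n. c * r ^ n) \<longlonglongrightarrow> 0"
    using assms by (intro tendsto_mult_right_zero LIMSEQ_power_zero) auto
  then have "eventually (\<lambda>n. c * r ^ n < e) sequentially"
    using \<open>e > 0\<close> by (rule order_tendstoD)
  then obtain n where "\<And>m. m \<ge> n \<Longrightarrow> c * r ^ m < e" by (auto simp: eventually_sequentially)
  then have "c * r ^ Suc n < e" using le_SucI by blast
  then show ?thesis by (intro that[of "Suc n"]) simp_all
qed

section \<open>The step skew product\<close>

lemma shift_funpow: "(shift ^^ n) \<eta> = (\<lambda>k. \<eta> (k + int n))"
  by (induction n arbitrary: \<eta>) (auto simp: shift_def add.assoc)

lemma shift_inv_funpow: "(shift_inv ^^ n) \<eta> = (\<lambda>k. \<eta> (k - int n))"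
  by (induction n arbitrary: \<eta>) (auto simp: shift_inv_def algebra_simps)

lemma inj_shift_funpow: "inj (shift ^^ n)"
proof (rule injI)
  fix \<eta> \<theta> :: "int \<Rightarrow> nat"
  assume eq: "(shift ^^ n) \<eta> = (shift ^^ n) \<theta>"
  have "\<eta> k = \<theta> k" for k
    using fun_cong[OF eq, of "k - int n"] by (simp add: shift_funpow)
  then show "\<eta> = \<theta>" by blast
qed

lemma SigmaN_memD: "\<eta> \<in> SigmaN N \<Longrightarrow> \<eta> k \<in> {1..N}"
  by (simp add: SigmaN_def)

lemma LambdaSet_subset: "LambdaSet N f \<subseteq> SigmaN N \<times> unitI"
proof -
  have "LambdaSet N f \<subseteq> (skewF f ^^ 0) ` (SigmaN N \<times> unitI)"
    unfolding LambdaSet_def by (rule INT_lower) simp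
  then show ?thesis by simp
qed

lemma funpow_left_inverse_on:
  assumes "\<And>z. z \<in> A \<Longrightarrow> T z \<in> A" and "\<And>z. z \<in> A \<Longrightarrow> S (T z) = z" and "z \<in> A"
  shows "(S ^^ n) ((T ^^ n) z) = z"
proof (induction n)
  case (Suc n)
  have "(T ^^ n) z \<in> A" by (induction n) (simp_all add: assms)
  then have "(S ^^ Suc n) ((T ^^ Suc n) z) = (S ^^ n) ((T ^^ n) z)"
    unfolding funpow_Suc_right[of n S] funpow.simps(2)[of n T] o_apply by (simp add: assms(2))
  with Suc.IH show ?case by simp
qed simp

text \<open>The paper's f_{\<eta>_0 ... \<eta>_{n-1}} = f_{\<eta>_{n-1}} o ... o f_{\<eta>_0}, and its derivative by the chain rule.\<close>

fun fiber_map :: "(nat \<Rightarrow> real \<Rightarrow> real) \<Rightarrow> (int \<Rightarrow> nat) \<Rightarrow> nat \<Rightarrow> real \<Rightarrow> real" where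
  "fiber_map f \<eta> 0 q = q"
| "fiber_map f \<eta> (Suc n) q = f (\<eta> (int n)) (fiber_map f \<eta> n q)"

fun fiber_deriv ::
  "(nat \<Rightarrow> real \<Rightarrow> real) \<Rightarrow> (nat \<Rightarrow> real \<Rightarrow> real) \<Rightarrow> (int \<Rightarrow> nat) \<Rightarrow> nat \<Rightarrow> real \<Rightarrow> real" where
  "fiber_deriv f f' \<eta> 0 q = 1"
| "fiber_deriv f f' \<eta> (Suc n) q = f' (\<eta> (int n)) (fiber_map f \<eta> n q) * fiber_deriv f f' \<eta> n q"

lemma skewF_funpow: "(skewF f ^^ n) (\<eta>, q) = ((shift ^^ n) \<eta>, fiber_map f \<eta> n q)"
  by (induction n) (auto simp: skewF_def shift_funpow)

lemma fst_skewF_funpow: "fst ((skewF f ^^ n) z) = (shift ^^ n) (fst z)"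
  by (cases z) (simp add: skewF_funpow)

lemma mem_fiberD: "x \<in> fiber H \<xi> \<Longrightarrow> (\<xi>, x) \<in> H"
  by (auto simp: fiber_def)

lemma fiber_deriv_cong:
  assumes "\<And>j. j < n \<Longrightarrow> \<eta> (int j) = \<theta> (int j)"
  shows "fiber_deriv f f' \<eta> n = fiber_deriv f f' \<theta> n"
proof -
  have "fiber_map f \<eta> k = fiber_map f \<theta> k" if "k \<le> n" for k
    using that assms by (induction k) auto
  then show ?thesis using assms by (induction n) auto
qed

locale C1_system =
  fixes N :: nat and f f' :: "nat \<Rightarrow> real \<Rightarrow> real"
  assumes maps_into: "\<And>i x. i \<in> {1..N} \<Longrightarrow> x \<in> unitI \<Longrightarrow> f i x \<in> unitI"
    and inj: "\<And>i. i \<in> {1..N} \<Longrightarrow> inj_on (f i) unitI"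
    and has_deriv: "\<And>i x. i \<in> {1..N} \<Longrightarrow> x \<in> unitI \<Longrightarrow> (f i has_real_derivative f' i x) (at x within unitI)"
    and deriv_continuous: "\<And>i. i \<in> {1..N} \<Longrightarrow> continuous_on unitI (f' i)"
    and deriv_nonzero: "\<And>i x. i \<in> {1..N} \<Longrightarrow> x \<in> unitI \<Longrightarrow> f' i x \<noteq> 0"

lemma C1_system_if_diffeos:
  assumes "\<forall>i\<in>{1..N}. C1_diffeo_into_I (f i)"
  obtains f' where "C1_system N f f'"
proof -
  obtain f' where deriv: "\<forall>i\<in>{1..N}. (\<forall>x\<in>unitI. (f i has_real_derivative f' i x) (at x within unitI)) \<and>
      continuous_on unitI (f' i) \<and> (\<forall>x\<in>unitI. f' i x \<noteq> 0)"
    using assms unfolding C1_diffeo_into_I_def by metis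
  have "C1_system N f f'"
  proof
    fix i x assume "i \<in> {1..N}" and "x \<in> unitI"
    then show "f i x \<in> unitI" and "(f i has_real_derivative f' i x) (at x within unitI)"
      and "f' i x \<noteq> 0"
      using assms deriv unfolding C1_diffeo_into_I_def by blast+
  next
    fix i assume "i \<in> {1..N}"
    then show "inj_on (f i) unitI" and "continuous_on unitI (f' i)"
      using assms deriv unfolding C1_diffeo_into_I_def by blast+
  qed
  then show ?thesis by (rule that)
qed

context C1_system
begin

lemma fiber_map_in:
  assumes "\<forall>j<n. \<eta> (int j) \<in> {1..N}" and "q \<in> unitI"
  shows "fiber_map f \<eta> n q \<in> unitI"
  using assms by (induction n) (auto intro!: maps_into simp del: atLeastAtMost_iff)

lemma fiber_map_has_deriv:
  assumes prefix: "\<forall>j<n. \<eta> (int j) \<in> {1..N}" and "q \<in> unitI"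
  shows "(fiber_map f \<eta> n has_real_derivative fiber_deriv f f' \<eta> n q) (at q within unitI)"
  using prefix
proof (induction n)
  case 0
  then show ?case by (simp del: atLeastAtMost_iff)
next
  case (Suc n)
  let ?g = "fiber_map f \<eta> n" and ?i = "\<eta> (int n)"
  have i: "?i \<in> {1..N}" using Suc.prems by blast
  have prefix_n: "\<forall>j<n. \<eta> (int j) \<in> {1..N}" using Suc.prems by simp
  have "?g q \<in> unitI" and "?g ` unitI \<subseteq> unitI"
    using fiber_map_in[OF prefix_n] \<open>q \<in> unitI\<close> by blast+
  then have "(f ?i has_real_derivative f' ?i (?g q)) (at (?g q) within ?g ` unitI)"
    by (intro has_field_derivative_subset[OF has_deriv[OF i]])
  moreover have "(?g has_real_derivative fiber_deriv f f' \<eta> n q) (at q within unitI)"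
    using Suc.IH prefix_n by blast
  ultimately show ?case using DERIV_image_chain by (fastforce simp: o_def)
qed

lemma fiber_map_continuous:
  assumes "\<forall>j<n. \<eta> (int j) \<in> {1..N}"
  shows "continuous_on unitI (fiber_map f \<eta> n)"
  unfolding continuous_on_eq_continuous_within
  using fiber_map_has_deriv[of n \<eta>] assms DERIV_continuous by blast

lemma fiber_map_inj:
  assumes "\<forall>j<n. \<eta> (int j) \<in> {1..N}"
  shows "inj_on (fiber_map f \<eta> n) unitI"
  using assms
proof (induction n)
  case (Suc n)
  have "inj_on (f (\<eta> (int n)) \<circ> fiber_map f \<eta> n) unitI"
    using Suc fiber_map_in inj by (intro comp_inj_on inj_on_subset[OF inj]) auto
  then show ?case by (simp add: o_def)
qed (simp add: inj_on_def)

lemma fiber_deriv_continuous: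
  assumes "\<forall>j<n. \<eta> (int j) \<in> {1..N}"
  shows "continuous_on unitI (fiber_deriv f f' \<eta> n)"
  using assms
proof (induction n)
  case (Suc n)
  have "continuous_on unitI (\<lambda>q. f' (\<eta> (int n)) (fiber_map f \<eta> n q))"
    using Suc.prems fiber_map_in
    by (intro continuous_on_compose2[OF deriv_continuous fiber_map_continuous]) auto
  with Suc show ?case by (simp add: continuous_on_mult)
qed auto

lemma fiber_deriv_nonzero:
  assumes "\<forall>j<n. \<eta> (int j) \<in> {1..N}" and "q \<in> unitI"
  shows "fiber_deriv f f' \<eta> n q \<noteq> 0"
  using assms
proof (induction n)
  case (Suc n)
  then have "f' (\<eta> (int n)) (fiber_map f \<eta> n q) \<noteq> 0"
    by (intro deriv_nonzero fiber_map_in) auto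
  with Suc show ?case by simp
qed simp

lemma fiber_deriv_uniformly_equicontinuous:
  assumes "\<epsilon> > 0"
  obtains \<delta> where "\<delta> > 0" and "\<And>\<eta> x y. \<eta> \<in> SigmaN N \<Longrightarrow> x \<in> unitI \<Longrightarrow> y \<in> unitI \<Longrightarrow> \<bar>x - y\<bar> < \<delta> \<Longrightarrow>
      \<bar>fiber_deriv f f' \<eta> n x - fiber_deriv f f' \<eta> n y\<bar> < \<epsilon>"
proof -
  let ?A = "PiE (int ` {..<n}) (\<lambda>_. {1..N})"
  let ?G = "(\<lambda>\<theta>. fiber_deriv f f' \<theta> n) ` ?A"
  have "finite ?G" by (simp add: finite_PiE)
  moreover have "continuous_on unitI g" if "g \<in> ?G" for g
    using that by (auto intro!: fiber_deriv_continuous simp: PiE_iff)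
  ultimately obtain \<delta> where "\<delta> > 0" and \<delta>: "\<And>g x y. g \<in> ?G \<Longrightarrow>
      x \<in> unitI \<Longrightarrow> y \<in> unitI \<Longrightarrow> dist x y < \<delta> \<Longrightarrow> dist (g x) (g y) < \<epsilon>"
    using finite_family_uniformly_equicontinuous[OF _ _ compact_Icc \<open>\<epsilon> > 0\<close>] by blast
  show ?thesis
  proof (rule that[OF \<open>\<delta> > 0\<close>])
    fix \<eta> x y assume "\<eta> \<in> SigmaN N" "x \<in> unitI" "y \<in> unitI" "\<bar>x - y\<bar> < \<delta>"
    moreover have "fiber_deriv f f' \<eta> n = fiber_deriv f f' (restrict \<eta> (int ` {..<n})) n"
      by (rule fiber_deriv_cong) auto
    moreover have "restrict \<eta> (int ` {..<n}) \<in> ?A" using \<open>\<eta> \<in> SigmaN N\<close> by (auto simp: SigmaN_def)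
    ultimately show "\<bar>fiber_deriv f f' \<eta> n x - fiber_deriv f f' \<eta> n y\<bar> < \<epsilon>"
      using \<delta> by (auto simp: dist_real_def)
  qed
qed

lemma fiber_map_increment:
  assumes "\<epsilon> > 0"
  obtains \<delta> where "\<delta> > 0" and "\<And>\<eta> x y. \<eta> \<in> SigmaN N \<Longrightarrow> x \<in> unitI \<Longrightarrow> y \<in> unitI \<Longrightarrow> \<bar>y - x\<bar> < \<delta> \<Longrightarrow>
      \<bar>\<bar>fiber_map f \<eta> n y - fiber_map f \<eta> n x\<bar> - \<bar>fiber_deriv f f' \<eta> n x\<bar> * \<bar>y - x\<bar>\<bar> \<le> \<epsilon> * \<bar>y - x\<bar>"
proof -
  obtain \<delta> where "\<delta> > 0" and \<delta>: "\<And>\<eta> x y. \<eta> \<in> SigmaN N \<Longrightarrow> x \<in> unitI \<Longrightarrow> y \<in> unitI \<Longrightarrow> \<bar>x - y\<bar> < \<delta> \<Longrightarrow>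
      \<bar>fiber_deriv f f' \<eta> n x - fiber_deriv f f' \<eta> n y\<bar> < \<epsilon>"
    using fiber_deriv_uniformly_equicontinuous[OF \<open>\<epsilon> > 0\<close>] by blast
  show ?thesis
  proof (rule that[OF \<open>\<delta> > 0\<close>])
    fix \<eta> x y assume \<eta>: "\<eta> \<in> SigmaN N" and x: "x \<in> unitI" and y: "y \<in> unitI" and "\<bar>y - x\<bar> < \<delta>"
    obtain z where z: "z \<in> unitI" "\<bar>z - x\<bar> \<le> \<bar>y - x\<bar>"
      and mvt: "\<bar>fiber_map f \<eta> n y - fiber_map f \<eta> n x\<bar> = \<bar>fiber_deriv f f' \<eta> n z\<bar> * \<bar>y - x\<bar>"
      using mvt_abs_within_interval[OF fiber_map_has_deriv x y] \<eta> SigmaN_memD by blast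
    have "\<bar>\<bar>fiber_deriv f f' \<eta> n z\<bar> - \<bar>fiber_deriv f f' \<eta> n x\<bar>\<bar> \<le> \<epsilon>"
      using \<delta>[OF \<eta> z(1) x] z(2) \<open>\<bar>y - x\<bar> < \<delta>\<close> by linarith
    then have "\<bar>\<bar>fiber_deriv f f' \<eta> n z\<bar> - \<bar>fiber_deriv f f' \<eta> n x\<bar>\<bar> * \<bar>y - x\<bar> \<le> \<epsilon> * \<bar>y - x\<bar>"
      by (rule mult_right_mono) simp
    then show "\<bar>\<bar>fiber_map f \<eta> n y - fiber_map f \<eta> n x\<bar> - \<bar>fiber_deriv f f' \<eta> n x\<bar> * \<bar>y - x\<bar>\<bar> \<le> \<epsilon> * \<bar>y - x\<bar>"
      unfolding mvt by (metis abs_abs abs_mult left_diff_distrib)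
  qed
qed

lemma skewF_in: "z \<in> SigmaN N \<times> unitI \<Longrightarrow> skewF f z \<in> SigmaN N \<times> unitI"
  by (auto simp: skewF_def shift_def SigmaN_def intro!: maps_into simp del: atLeastAtMost_iff)

lemma skewF_inv_skewF: "z \<in> SigmaN N \<times> unitI \<Longrightarrow> skewF_inv f (skewF f z) = z"
  by (auto simp: skewF_def skewF_inv_def shift_def shift_inv_def SigmaN_def the_inv_into_f_f inj
      simp del: atLeastAtMost_iff)

lemma vector_derivative_fiber_map:
  assumes "\<eta> \<in> SigmaN N" and "x \<in> unitI"
  shows "vector_derivative (\<lambda>q. snd ((skewF f ^^ n) (\<eta>, q))) (at x within unitI) = fiber_deriv f f' \<eta> n x"
proof -
  have "(fiber_map f \<eta> n has_vector_derivative fiber_deriv f f' \<eta> n x) (at x within unitI)"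
    using fiber_map_has_deriv assms SigmaN_memD has_real_derivative_iff_has_vector_derivative by blast
  with assms(2) show ?thesis
    by (simp add: skewF_funpow vector_derivative_within_closed_interval)
qed

lemma vector_derivative_inverse_fiber_map:
  assumes "\<eta> \<in> SigmaN N" and "x \<in> unitI"
  shows "vector_derivative (\<lambda>q. snd ((skewF_inv f ^^ n) ((shift ^^ n) \<eta>, q)))
      (at (fiber_map f \<eta> n x) within fiber_map f \<eta> n ` unitI) = inverse (fiber_deriv f f' \<eta> n x)"
proof (rule vector_derivative_inverse_on_image)
  have prefix: "\<forall>j<n. \<eta> (int j) \<in> {1..N}" using assms(1) SigmaN_memD by blast
  show "continuous_on unitI (fiber_map f \<eta> n)" using fiber_map_continuous prefix by blast
  show "inj_on (fiber_map f \<eta> n) unitI" using fiber_map_inj prefix by blast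
  show "(fiber_map f \<eta> n has_real_derivative fiber_deriv f f' \<eta> n x) (at x within unitI)"
    using fiber_map_has_deriv prefix assms(2) by blast
  show "fiber_deriv f f' \<eta> n x \<noteq> 0" using fiber_deriv_nonzero prefix assms(2) by blast
  fix y assume "y \<in> unitI"
  with assms(1) have "(skewF_inv f ^^ n) ((skewF f ^^ n) (\<eta>, y)) = (\<eta>, y)"
    by (intro funpow_left_inverse_on[of "SigmaN N \<times> unitI"] skewF_in skewF_inv_skewF) auto
  then show "snd ((skewF_inv f ^^ n) ((shift ^^ n) \<eta>, fiber_map f \<eta> n y)) = y"
    by (simp add: skewF_funpow)
qed (use assms(2) in auto)

lemma fiber_deriv_small_if_contraction:
  assumes "hyp_fiber_contraction f H" and H: "H \<subseteq> SigmaN N \<times> unitI"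
  obtains m where "\<And>\<eta> x. (\<eta>, x) \<in> H \<Longrightarrow> \<bar>fiber_deriv f f' \<eta> m x\<bar> \<le> 1/4"
proof -
  obtain c r where "0 < r" "r < 1" and bound: "\<forall>n\<ge>1. \<forall>(\<xi>, p)\<in>H.
      \<bar>vector_derivative (\<lambda>q. snd ((skewF f ^^ n) (\<xi>, q))) (at p within unitI)\<bar> \<le> c * r ^ n"
    using assms(1) unfolding hyp_fiber_contraction_def by blast
  obtain m where "m \<ge> 1" "c * r ^ m < 1/4"
    using geometric_eventually_less[of r "1/4" c] \<open>0 < r\<close> \<open>r < 1\<close> by auto
  show ?thesis
  proof (rule that)
    fix \<eta> x assume "(\<eta>, x) \<in> H"
    with bound \<open>m \<ge> 1\<close> have "\<bar>vector_derivative (\<lambda>q. snd ((skewF f ^^ m) (\<eta>, q))) (at x within unitI)\<bar> \<le> c * r ^ m"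
      by blast
    with \<open>(\<eta>, x) \<in> H\<close> H \<open>c * r ^ m < 1/4\<close> show "\<bar>fiber_deriv f f' \<eta> m x\<bar> \<le> 1/4"
      using vector_derivative_fiber_map by fastforce
  qed
qed

lemma fiber_deriv_large_if_expansion:
  assumes "hyp_fiber_expansion f H" and H: "H \<subseteq> SigmaN N \<times> unitI" and "skewF f ` H = H"
  obtains m where "\<And>\<eta> x. (\<eta>, x) \<in> H \<Longrightarrow> 4 \<le> \<bar>fiber_deriv f f' \<eta> m x\<bar>"
proof -
  obtain c r where "0 < r" "r < 1" and bound: "\<forall>n\<ge>1. \<forall>(\<xi>, p)\<in>H.
      \<bar>vector_derivative (\<lambda>q. snd ((skewF_inv f ^^ n) (\<xi>, q)))
          (at p within ((\<lambda>q. snd ((skewF f ^^ n) ((shift_inv ^^ n) \<xi>, q))) ` unitI))\<bar> \<le> c * r ^ n"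
    using assms(1) unfolding hyp_fiber_expansion_def by blast
  obtain m where "m \<ge> 1" "c * r ^ m < 1/4"
    using geometric_eventually_less[of r "1/4" c] \<open>0 < r\<close> \<open>r < 1\<close> by auto
  show ?thesis
  proof (rule that)
    fix \<eta> x assume "(\<eta>, x) \<in> H"
    then have \<eta>: "\<eta> \<in> SigmaN N" and x: "x \<in> unitI" using H by auto
    let ?D = "fiber_deriv f f' \<eta> m x"
    have "((shift ^^ m) \<eta>, fiber_map f \<eta> m x) \<in> H"
      using \<open>(\<eta>, x) \<in> H\<close> funpow_image_eq[OF \<open>skewF f ` H = H\<close>, of m] by (metis image_eqI skewF_funpow)
    with bound \<open>m \<ge> 1\<close> have "\<bar>vector_derivative (\<lambda>q. snd ((skewF_inv f ^^ m) ((shift ^^ m) \<eta>, q)))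
        (at (fiber_map f \<eta> m x) within fiber_map f \<eta> m ` unitI)\<bar> \<le> c * r ^ m"
      by (fastforce simp: skewF_funpow shift_funpow shift_inv_funpow)
    then have "\<bar>inverse ?D\<bar> < 1/4"
      using vector_derivative_inverse_fiber_map[OF \<eta> x] \<open>c * r ^ m < 1/4\<close> by simp
    moreover have "?D \<noteq> 0" using fiber_deriv_nonzero \<eta> x SigmaN_memD by blast
    ultimately show "4 \<le> \<bar>?D\<bar>" by (simp add: field_simps)
  qed
qed

lemma card_fiber_bounded_if_fiber_deriv_small:
  assumes H: "H \<subseteq> SigmaN N \<times> unitI" and "skewF f ` H = H"
    and small: "\<And>\<eta> x. (\<eta>, x) \<in> H \<Longrightarrow> \<bar>fiber_deriv f f' \<eta> m x\<bar> \<le> 1/4"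
  obtains \<delta> :: real where "\<delta> > 0"
    and "\<And>\<xi> S. finite S \<Longrightarrow> S \<subseteq> fiber H \<xi> \<Longrightarrow> card S \<le> nat \<lfloor>1 / \<delta>\<rfloor> + 1"
proof -
  obtain \<delta> :: real where "\<delta> > 0" and incr: "\<And>\<eta> x y. \<eta> \<in> SigmaN N \<Longrightarrow> x \<in> unitI \<Longrightarrow> y \<in> unitI \<Longrightarrow>
      \<bar>y - x\<bar> < \<delta> \<Longrightarrow> \<bar>\<bar>fiber_map f \<eta> m y - fiber_map f \<eta> m x\<bar> - \<bar>fiber_deriv f f' \<eta> m x\<bar> * \<bar>y - x\<bar>\<bar>
        \<le> 1/4 * \<bar>y - x\<bar>"
    by (rule fiber_map_increment[of "1/4" m]) simp_all
  have contr: "\<bar>snd ((skewF f ^^ m) (\<eta>, x)) - snd ((skewF f ^^ m) (\<eta>, y))\<bar> \<le> \<bar>x - y\<bar> / 2"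
    if "(\<eta>, x) \<in> H" "(\<eta>, y) \<in> H" "\<bar>x - y\<bar> < \<delta>" for \<eta> x y
  proof -
    have "\<bar>fiber_deriv f f' \<eta> m x\<bar> * \<bar>y - x\<bar> \<le> 1/4 * \<bar>y - x\<bar>"
      using small[OF that(1)] by (rule mult_right_mono) simp
    moreover have "\<eta> \<in> SigmaN N" "x \<in> unitI" "y \<in> unitI" using that H by auto
    ultimately have "\<bar>fiber_map f \<eta> m y - fiber_map f \<eta> m x\<bar> \<le> \<bar>y - x\<bar> / 2"
      using abs_le_D1[OF incr[of \<eta> x y]] that(3) by (simp add: abs_minus_commute)
    then show ?thesis by (simp add: skewF_funpow abs_minus_commute)
  qed
  show ?thesis
  proof (rule that[OF \<open>\<delta> > 0\<close>])
    fix \<xi> S assume "finite S" "S \<subseteq> fiber H \<xi>"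
    then have "\<And>s. s \<in> S \<Longrightarrow> (\<xi>, s) \<in> H" using mem_fiberD by blast
    moreover have "H \<subseteq> UNIV \<times> unitI" using H by blast
    ultimately show "card S \<le> nat \<lfloor>1 / \<delta>\<rfloor> + 1"
      using card_fiber_le_if_contracting[OF fst_skewF_funpow inj_shift_funpow
            funpow_image_eq[OF \<open>skewF f ` H = H\<close>] _ \<open>\<delta> > 0\<close> contr \<open>finite S\<close>] by blast
  qed
qed

lemma card_fiber_bounded_if_fiber_deriv_large:
  assumes H: "H \<subseteq> SigmaN N \<times> unitI" and "skewF f ` H \<subseteq> H"
    and large: "\<And>\<eta> x. (\<eta>, x) \<in> H \<Longrightarrow> 4 \<le> \<bar>fiber_deriv f f' \<eta> m x\<bar>"
  obtains \<delta> :: real where "\<delta> > 0"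
    and "\<And>\<xi> S. finite S \<Longrightarrow> S \<subseteq> fiber H \<xi> \<Longrightarrow> card S \<le> nat \<lfloor>1 / \<delta>\<rfloor> + 1"
proof -
  obtain \<delta>' :: real where "\<delta>' > 0" and incr: "\<And>\<eta> x y. \<eta> \<in> SigmaN N \<Longrightarrow> x \<in> unitI \<Longrightarrow> y \<in> unitI \<Longrightarrow>
      \<bar>y - x\<bar> < \<delta>' \<Longrightarrow> \<bar>\<bar>fiber_map f \<eta> m y - fiber_map f \<eta> m x\<bar> - \<bar>fiber_deriv f f' \<eta> m x\<bar> * \<bar>y - x\<bar>\<bar>
        \<le> 2 * \<bar>y - x\<bar>"
    by (rule fiber_map_increment[of 2 m]) simp_all
  define \<delta> where "\<delta> = \<delta>' / 2"
  have "\<delta> > 0" "\<delta> < \<delta>'" using \<open>\<delta>' > 0\<close> by (simp_all add: \<delta>_def)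
  have expa: "min \<delta> (2 * \<bar>x - y\<bar>) \<le> \<bar>snd ((skewF f ^^ m) (\<eta>, x)) - snd ((skewF f ^^ m) (\<eta>, y))\<bar>"
    if "(\<eta>, x) \<in> H" "(\<eta>, y) \<in> H" for \<eta> x y
  proof -
    have \<eta>: "\<eta> \<in> SigmaN N" and x: "x \<in> unitI" and y: "y \<in> unitI" using that H by auto
    then have prefix: "\<forall>j<m. \<eta> (int j) \<in> {1..N}" using SigmaN_memD by blast
    have local_expansion: "2 * \<bar>z - x\<bar> \<le> \<bar>fiber_map f \<eta> m z - fiber_map f \<eta> m x\<bar>"
      if "z \<in> unitI" "\<bar>z - x\<bar> \<le> \<delta>" for z
    proof -
      have "4 * \<bar>z - x\<bar> \<le> \<bar>fiber_deriv f f' \<eta> m x\<bar> * \<bar>z - x\<bar>"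
        using large[OF \<open>(\<eta>, x) \<in> H\<close>] by (rule mult_right_mono) simp
      moreover have "\<bar>z - x\<bar> < \<delta>'" using that(2) \<open>\<delta> < \<delta>'\<close> by linarith
      note abs_le_D2[OF incr[OF \<eta> x that(1) this]]
      ultimately show ?thesis by linarith
    qed
    have "2 * min \<delta> \<bar>y - x\<bar> \<le> \<bar>fiber_map f \<eta> m y - fiber_map f \<eta> m x\<bar>"
      by (rule inj_continuous_expands_from_local[OF fiber_map_continuous[OF prefix]
            fiber_map_inj[OF prefix] \<open>\<delta> > 0\<close> x y local_expansion])
    moreover have "min \<delta> (2 * \<bar>x - y\<bar>) \<le> 2 * min \<delta> \<bar>y - x\<bar>"
      using \<open>\<delta> > 0\<close> by (simp add: abs_minus_commute)
    ultimately show ?thesis by (simp add: skewF_funpow abs_minus_commute)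
  qed
  show ?thesis
  proof (rule that[OF \<open>\<delta> > 0\<close>])
    fix \<xi> S assume "finite S" "S \<subseteq> fiber H \<xi>"
    then have "\<And>s. s \<in> S \<Longrightarrow> (\<xi>, s) \<in> H" using mem_fiberD by blast
    moreover have "H \<subseteq> UNIV \<times> unitI" using H by blast
    ultimately show "card S \<le> nat \<lfloor>1 / \<delta>\<rfloor> + 1"
      using card_fiber_le_if_expanding[OF fst_skewF_funpow
            funpow_image_subset[OF \<open>skewF f ` H \<subseteq> H\<close>] _ \<open>\<delta> > 0\<close> expa \<open>finite S\<close>] by blast
  qed
qed

lemma fibers_uniformly_finite_if_hyperbolic:
  assumes "hyperbolic_set f H" and "H \<subseteq> SigmaN N \<times> unitI" and "skewF f ` H = H"
  obtains M :: nat where "M \<ge> 1" and "\<And>\<xi>. finite (fiber H \<xi>) \<and> card (fiber H \<xi>) \<le> M"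
proof -
  obtain \<delta> :: real where "\<delta> > 0"
    and bound: "\<And>\<xi> S. finite S \<Longrightarrow> S \<subseteq> fiber H \<xi> \<Longrightarrow> card S \<le> nat \<lfloor>1 / \<delta>\<rfloor> + 1"
    using assms(1) unfolding hyperbolic_set_def
  proof
    assume "hyp_fiber_contraction f H"
    then obtain m where small: "\<And>\<eta> x. (\<eta>, x) \<in> H \<Longrightarrow> \<bar>fiber_deriv f f' \<eta> m x\<bar> \<le> 1/4"
      using fiber_deriv_small_if_contraction assms(2) by blast
    show thesis by (rule card_fiber_bounded_if_fiber_deriv_small[OF assms(2,3) small that])
  next
    assume "hyp_fiber_expansion f H"
    then obtain m where large: "\<And>\<eta> x. (\<eta>, x) \<in> H \<Longrightarrow> 4 \<le> \<bar>fiber_deriv f f' \<eta> m x\<bar>"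
      using fiber_deriv_large_if_expansion assms(2,3) by blast
    have "skewF f ` H \<subseteq> H" using assms(3) by simp
    then show thesis by (rule card_fiber_bounded_if_fiber_deriv_large[OF assms(2) _ large that])
  qed
  have "finite (fiber H \<xi>) \<and> card (fiber H \<xi>) \<le> nat \<lfloor>1 / \<delta>\<rfloor> + 1" for \<xi>
    using bound by (intro finite_if_finite_subsets_card_bdd) blast
  then show ?thesis by (intro that[of "nat \<lfloor>1 / \<delta>\<rfloor> + 1"]) auto
qed

end

theorem theoremA:
  fixes N :: nat and f :: "nat \<Rightarrow> real \<Rightarrow> real"
    and H :: "((int \<Rightarrow> nat) \<times> real) set"
  assumes diffeo: "\<forall>i\<in>{1..N}. C1_diffeo_into_I (f i)"
    and H_sub: "H \<subseteq> LambdaSet N f"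
    and H_inv: "skewF f ` H = H"
    and H_hyp: "hyperbolic_set f H"
  shows "\<exists>M::nat. M \<ge> 1 \<and>
           (\<forall>\<xi>\<in>SigmaN N. finite (fiber H \<xi>) \<and> card (fiber H \<xi>) \<le> M)"
proof -
  obtain f' where "C1_system N f f'" using C1_system_if_diffeos[OF diffeo] by blast
  then interpret C1_system N f f' .
  have "H \<subseteq> SigmaN N \<times> unitI" using H_sub LambdaSet_subset by blast
  then obtain M :: nat where "M \<ge> 1" and "\<And>\<xi>. finite (fiber H \<xi>) \<and> card (fiber H \<xi>) \<le> M"
    by (rule fibers_uniformly_finite_if_hyperbolic[OF H_hyp _ H_inv]) blast
  then show ?thesis by blast
qed

end
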